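(* Let $A,B,C$ be non-collinear points of the real affine plane. Let $A^{+},A^{-}$ be points on line $\overleftrightarrow{BC}$, $B^{+},B^{-}$ points on line $\overleftrightarrow{CA}$, and $C^{+},C^{-}$ points on line $\overleftrightarrow{AB}$, with $A^{+}\neq C$, $A^{-}\neq B$, $B^{+}\neq A$, $B^{-}\neq C$, $C^{+}\neq B$, $C^{-}\neq A$. Define $$a^{+}=\frac{|BA^{+}|}{|A^{+}C|},\quad b^{+}=\frac{|CB^{+}|}{|B^{+}A|},\quad c^{+}=\frac{|AC^{+}|}{|C^{+}B|},\quad a^{-}=\frac{|CA^{-}|}{|A^{-}B|},\quad b^{-}=\frac{|AB^{-}|}{|B^{-}C|},\quad c^{-}=\frac{|BC^{-}|}{|C^{-}A|}.$$ Let $\widehat{B^{-}C^{+}}$ be the intersection point of the lines $\overleftrightarrow{BB^{-}}$ and $\overleftrightarrow{CC^{+}}$, $\widehat{C^{-}A^{+}}$ the intersection of $\overleftrightarrow{CC^{-}}$ and $\overleftrightarrow{AA^{+}}$, and $\widehat{A^{-}B^{+}}$ the intersection of $\overleftrightarrow{AA^{-}}$ and $\overleftrightarrow{BB^{+}}$ (intersections taken in the projective plane, so a point may be at infinity when the two lines are parallel). Then these three points lie on a common (projective) line if and only if $$a^{+}b^{+}c^{+}+a^{-}b^{-}c^{-}=-1+a^{+}a^{-}+b^{+}b^{-}+c^{+}c^{-}.$$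
   Context: Segment lengths are signed: for points on one of the lines $\overleftrightarrow{AB}$, $\overleftrightarrow{BC}$, $\overleftrightarrow{CA}$, $|PQ|$ is positive when $\overrightarrow{PQ}$ points in the direction of $\overrightarrow{AB}$, $\overrightarrow{BC}$, $\overrightarrow{CA}$ respectively; with $|PP|/|PQ|=0$. Equivalently, e.g. $A^{+}=(B+a^{+}C)/(1+a^{+})$ and $A^{-}=(a^{-}B+C)/(1+a^{-})$ as vectors, and similarly for the other points. The hypotheses guarantee that each pair of lines whose intersection is taken is a pair of distinct lines. *)

theory Defs
  imports "HOL-Analysis.Analysis"
begin

text \<open>Signed ratio |PX|/|XQ| for X on the line PQ: the unique t with X - P = t (Q - X).\<close>
definition sratio :: "real^2 \<Rightarrow> real^2 \<Rightarrow> real^2 \<Rightarrow> real" where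
  "sratio P X Q = (THE t. X - P = t *\<^sub>R (Q - X))"

definition hom :: "real^2 \<Rightarrow> real^3" where
  "hom P = vector [P$1, P$2, 1]"

definition pline :: "real^2 \<Rightarrow> real^2 \<Rightarrow> real^3" where
  "pline P Q = cross3 (hom P) (hom Q)"

definition pmeet :: "real^3 \<Rightarrow> real^3 \<Rightarrow> real^3" where
  "pmeet l m = cross3 l m"

definition pcollinear :: "real^3 \<Rightarrow> real^3 \<Rightarrow> real^3 \<Rightarrow> bool" where
  "pcollinear p q r \<longleftrightarrow> (\<exists>l::real^3. l \<noteq> 0 \<and> l \<bullet> p = 0 \<and> l \<bullet> q = 0 \<and> l \<bullet> r = 0)"

end

theory Submission
  imports Defs
begin

text \<open>In homogeneous coordinates the meet of the cevians through \<open>B\<close> and \<open>C\<close> is, up to a nonzero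
  factor, \<open>hom A + c\<^sup>+ hom B + b\<^sup>- hom C\<close>, and cyclically for the other two meets. The three meets
  are therefore collinear iff the determinant of the coefficient matrix with rows
  \<open>(1, c\<^sup>+, b\<^sup>-)\<close>, \<open>(c\<^sup>-, 1, a\<^sup>+)\<close>, \<open>(b\<^sup>+, a\<^sup>-, 1)\<close> vanishes, which is the stated identity; the
  triangle being nondegenerate makes \<open>hom A, hom B, hom C\<close> a basis.\<close>

lemma pcollinear_iff_det: "pcollinear p q r \<longleftrightarrow> det (vector [p, q, r] :: real^3^3) = 0"
proof -
  let ?M = "vector [p, q, r] :: real^3^3"
  have kernel: "?M *v l = 0 \<longleftrightarrow> l \<bullet> p = 0 \<and> l \<bullet> q = 0 \<and> l \<bullet> r = 0" for l
    by (simp add: vec_eq_iff forall_3 matrix_vector_mult_def inner_vec_def sum_3 mult.commute)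
  have "det ?M = 0 \<longleftrightarrow> \<not> invertible ?M"
    using invertible_det_nz by blast
  also have "\<dots> \<longleftrightarrow> \<not> (\<forall>l. ?M *v l = 0 \<longrightarrow> l = 0)"
    using invertible_left_inverse matrix_left_invertible_ker by blast
  also have "\<dots> \<longleftrightarrow> pcollinear p q r"
    unfolding pcollinear_def kernel by blast
  finally show ?thesis by simp
qed

lemma pcollinear_scaleR:
  assumes "a \<noteq> 0" "b \<noteq> 0" "c \<noteq> 0"
  shows "pcollinear (a *\<^sub>R p) (b *\<^sub>R q) (c *\<^sub>R r) \<longleftrightarrow> pcollinear p q r"
  using assms by (simp add: pcollinear_def)

lemma sratio_eq:
  assumes "X \<in> affine hull {P, Q}" "X \<noteq> Q"
  shows "X - P = sratio P X Q *\<^sub>R (Q - X)"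
proof -
  obtain s t where comb: "X = s *\<^sub>R P + t *\<^sub>R Q" and "s + t = 1"
    using assms(1) affine_hull_2 by blast
  then have "s = 1 - t" by simp
  with comb have X: "X = P + t *\<^sub>R (Q - P)"
    by (simp add: algebra_simps)
  have "t \<noteq> 1"
    using X assms(2) by auto
  have "X - P = t *\<^sub>R (Q - P)" "Q - X = (1 - t) *\<^sub>R (Q - P)"
    unfolding X by (simp_all add: algebra_simps)
  with \<open>t \<noteq> 1\<close> have ratio: "X - P = (t / (1 - t)) *\<^sub>R (Q - X)"
    by simp
  have "Q - X \<noteq> 0"
    using assms(2) by simp
  with ratio have "\<exists>!c. X - P = c *\<^sub>R (Q - X)"
    by (metis scaleR_cancel_right)
  then show ?thesis
    unfolding sratio_def by (rule theI')
qed

lemma hom_affine_combination: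
  assumes "u + v = 1"
  shows "hom (u *\<^sub>R P + v *\<^sub>R Q) = u *\<^sub>R hom P + v *\<^sub>R hom Q"
  using assms unfolding hom_def by (simp add: vec_eq_iff forall_3 algebra_simps)

lemma hom_on_line:
  assumes "X \<in> affine hull {P, Q}" "X \<noteq> Q" "P \<noteq> Q"
  shows "1 + sratio P X Q \<noteq> 0"
    and "hom X = (1 / (1 + sratio P X Q)) *\<^sub>R (hom P + sratio P X Q *\<^sub>R hom Q)"
proof -
  let ?a = "sratio P X Q"
  have X: "(1 + ?a) *\<^sub>R X = P + ?a *\<^sub>R Q"
    using sratio_eq[OF assms(1,2)] by (simp add: algebra_simps)
  show a: "1 + ?a \<noteq> 0"
  proof
    assume "1 + ?a = 0"
    then have "P - Q = 0"
      using X by (simp add: algebra_simps add_eq_0_iff)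
    with assms(3) show False by simp
  qed
  have "X = (1 / (1 + ?a)) *\<^sub>R P + (?a / (1 + ?a)) *\<^sub>R Q"
    using arg_cong[OF X, of "scaleR (1 / (1 + ?a))"] a by (simp add: scaleR_right_distrib)
  moreover have "1 / (1 + ?a) + ?a / (1 + ?a) = 1"
    using a by (simp add: add_divide_distrib[symmetric])
  ultimately have "hom X = (1 / (1 + ?a)) *\<^sub>R hom P + (?a / (1 + ?a)) *\<^sub>R hom Q"
    by (metis hom_affine_combination)
  then show "hom X = (1 / (1 + ?a)) *\<^sub>R (hom P + ?a *\<^sub>R hom Q)"
    by (simp add: scaleR_right_distrib)
qed

lemma collinear_0_if_wedge_eq_0:
  fixes x y :: "real^2"
  assumes "x $ 1 * y $ 2 - x $ 2 * y $ 1 = 0"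
  shows "collinear {0, x, y}"
proof (cases "x = 0")
  case True
  then show ?thesis by (simp add: collinear_lemma)
next
  case False
  then consider "x $ 1 \<noteq> 0" | "x $ 2 \<noteq> 0"
    by (auto simp: vec_eq_iff forall_2)
  then have "\<exists>c. y = c *\<^sub>R x"
  proof cases
    case 1
    with assms have "y = (y $ 1 / x $ 1) *\<^sub>R x"
      by (simp add: vec_eq_iff forall_2 field_simps)
    then show ?thesis ..
  next
    case 2
    with assms have "y = (y $ 2 / x $ 2) *\<^sub>R x"
      by (simp add: vec_eq_iff forall_2 field_simps)
    then show ?thesis ..
  qed
  then show ?thesis by (simp add: collinear_lemma)
qed

lemma det_hom_neq_0:
  assumes "\<not> collinear {A, B, C}"
  shows "det (vector [hom A, hom B, hom C] :: real^3^3) \<noteq> 0"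
proof
  assume "det (vector [hom A, hom B, hom C] :: real^3^3) = 0"
  then have "(A - B) $ 1 * (C - B) $ 2 - (A - B) $ 2 * (C - B) $ 1 = 0"
    by (simp add: hom_def det_3 algebra_simps)
  then have "collinear {0, A - B, C - B}"
    by (rule collinear_0_if_wedge_eq_0)
  with assms show False
    by (subst (asm) collinear_3[symmetric]) auto
qed

lemma cross3_cross3_cevians:
  "cross3 (cross3 v (k *\<^sub>R (u + b *\<^sub>R w))) (cross3 w (k' *\<^sub>R (u + c *\<^sub>R v)))
     = (k * k' * det (vector [u, v, w])) *\<^sub>R (u + c *\<^sub>R v + b *\<^sub>R w)"
  by (simp add: cross3_simps forall_3)

lemma det_cevian_meets:
  fixes u v w :: "real^3"
  shows "det (vector [u + cp *\<^sub>R v + bm *\<^sub>R w, v + ap *\<^sub>R w + cm *\<^sub>R u, w + bp *\<^sub>R u + am *\<^sub>R v])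
       = (1 + ap * bp * cp + am * bm * cm - ap * am - bp * bm - cp * cm) * det (vector [u, v, w])"
  by (simp add: det_3 algebra_simps)

lemma det_rotate3:
  fixes u v w :: "real^3"
  shows "det (vector [v, w, u]) = det (vector [u, v, w])"
  by (simp add: det_3 algebra_simps)

lemma pcollinear_cevian_meets:
  fixes u v w :: "real^3"
  assumes D: "det (vector [u, v, w]) \<noteq> 0"
    and "k1 \<noteq> 0" "k2 \<noteq> 0" "k3 \<noteq> 0" "k4 \<noteq> 0" "k5 \<noteq> 0" "k6 \<noteq> 0"
  shows "pcollinear (cross3 (cross3 v (k4 *\<^sub>R (u + bm *\<^sub>R w))) (cross3 w (k5 *\<^sub>R (u + cp *\<^sub>R v))))
                    (cross3 (cross3 w (k6 *\<^sub>R (v + cm *\<^sub>R u))) (cross3 u (k1 *\<^sub>R (v + ap *\<^sub>R w))))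
                    (cross3 (cross3 u (k2 *\<^sub>R (w + am *\<^sub>R v))) (cross3 v (k3 *\<^sub>R (w + bp *\<^sub>R u))))
     \<longleftrightarrow> ap * bp * cp + am * bm * cm = -1 + ap * am + bp * bm + cp * cm"
    (is "pcollinear ?P ?Q ?R \<longleftrightarrow> _")
proof -
  have "det (vector [v, w, u]) \<noteq> 0" "det (vector [w, u, v]) \<noteq> 0"
    using D by (simp_all add: det_rotate3)
  then have "pcollinear ?P ?Q ?R
      \<longleftrightarrow> pcollinear (u + cp *\<^sub>R v + bm *\<^sub>R w) (v + ap *\<^sub>R w + cm *\<^sub>R u) (w + bp *\<^sub>R u + am *\<^sub>R v)"
    unfolding cross3_cross3_cevians using assms by (intro pcollinear_scaleR) simp_all
  also have "\<dots> \<longleftrightarrow> (1 + ap * bp * cp + am * bm * cm - ap * am - bp * bm - cp * cm) * det (vector [u, v, w]) = 0"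
    by (simp only: pcollinear_iff_det det_cevian_meets)
  also have "\<dots> \<longleftrightarrow> ap * bp * cp + am * bm * cm = -1 + ap * am + bp * bm + cp * cm"
    using D by auto
  finally show ?thesis .
qed

theorem theorem3:
  fixes A B C Ap Am Bp Bm Cp Cm :: "real^2"
  assumes "\<not> collinear {A, B, C}"
    and "Ap \<in> affine hull {B, C}" and "Am \<in> affine hull {B, C}"
    and "Bp \<in> affine hull {C, A}" and "Bm \<in> affine hull {C, A}"
    and "Cp \<in> affine hull {A, B}" and "Cm \<in> affine hull {A, B}"
    and "Ap \<noteq> C" and "Am \<noteq> B" and "Bp \<noteq> A" and "Bm \<noteq> C"
    and "Cp \<noteq> B" and "Cm \<noteq> A"
  shows "pcollinear (pmeet (pline B Bm) (pline C Cp))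
                    (pmeet (pline C Cm) (pline A Ap))
                    (pmeet (pline A Am) (pline B Bp))
     \<longleftrightarrow> sratio B Ap C * sratio C Bp A * sratio A Cp B
         + sratio C Am B * sratio A Bm C * sratio B Cm A
       = -1 + sratio B Ap C * sratio C Am B + sratio C Bp A * sratio A Bm C
            + sratio A Cp B * sratio B Cm A"
proof -
  have "A \<noteq> B" "B \<noteq> C" "C \<noteq> A"
    using assms(1) by (metis collinear_2 insert_absorb2 insert_commute)+
  have "Am \<in> affine hull {C, B}" "Bm \<in> affine hull {A, C}" "Cm \<in> affine hull {B, A}"
    using assms(3,5,7) by (metis insert_commute)+
  note Ap = hom_on_line[OF assms(2,8) \<open>B \<noteq> C\<close>] and Am = hom_on_line[OF this(1) assms(9) \<open>B \<noteq> C\<close>[symmetric]]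
    and Bp = hom_on_line[OF assms(4,10) \<open>C \<noteq> A\<close>] and Bm = hom_on_line[OF this(2) assms(11) \<open>C \<noteq> A\<close>[symmetric]]
    and Cp = hom_on_line[OF assms(6,12) \<open>A \<noteq> B\<close>] and Cm = hom_on_line[OF this(3) assms(13) \<open>A \<noteq> B\<close>[symmetric]]
  have D: "det (vector [hom A, hom B, hom C] :: real^3^3) \<noteq> 0"
    using det_hom_neq_0[OF assms(1)] .
  show ?thesis
    unfolding pmeet_def pline_def Ap(2) Am(2) Bp(2) Bm(2) Cp(2) Cm(2)
    by (rule pcollinear_cevian_meets[OF D]) (use Ap(1) Am(1) Bp(1) Bm(1) Cp(1) Cm(1) in simp_all)
qed

end
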